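(* For all $j_1,j_2,j_3\in\tfrac12\mathbb{N}^+$, with the three tensor factors of sizes $2j_1+1,2j_2+1,2j_3+1$: \begin{align*} R^{(j_1,j_2)}_{12}(t)\widehat R^{(j_1,j_3)}_{13}\widehat R^{(j_2,j_3)}_{23}&=\widehat R^{(j_2,j_3)}_{23}\widehat R^{(j_1,j_3)}_{13}R^{(j_1,j_2)}_{12}(t),\\ R^{(j_1,j_3)}_{13}(t)\widehat R^{(j_2,j_3)}_{23}\widehat R^{(j_1,j_2)}_{12}&=\widehat R^{(j_1,j_2)}_{12}\widehat R^{(j_2,j_3)}_{23}R^{(j_1,j_3)}_{13}(t),\\ R^{(j_2,j_3)}_{23}(t)\widehat R^{(j_1,j_2)}_{12}\widehat R^{(j_1,j_3)}_{13}&=\widehat R^{(j_1,j_3)}_{13}\widehat R^{(j_1,j_2)}_{12}R^{(j_2,j_3)}_{23}(t),\\ R^{(j_1,j_2)}_{12}(t)\widehat R^{(j_2,j_3)}_{23}\widehat R^{(j_1,j_3)}_{13}&=\widehat R^{(j_1,j_3)}_{13}\widehat R^{(j_2,j_3)}_{23}R^{(j_1,j_2)}_{12}(t),\\ R^{(j_1,j_3)}_{13}(t)\widehat R^{(j_1,j_2)}_{12}\widehat R^{(j_2,j_3)}_{23}&=\widehat R^{(j_2,j_3)}_{23}\widehat R^{(j_1,j_2)}_{12}R^{(j_1,j_3)}_{13}(t),\\ R^{(j_2,j_3)}_{23}(t)\widehat R^{(j_1,j_3)}_{13}\widehat R^{(j_1,j_2)}_{12}&=\widehat R^{(j_1,j_2)}_{12}\widehat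 R^{(j_1,j_3)}_{13}R^{(j_2,j_3)}_{23}(t). \end{align*}
   Context: $\mathbb{F}$ is a field of characteristic zero in which every element has a square root; $q\in\mathbb{F}$ nonzero, not a root of unity, with fixed square root $q^{1/2}$ ($q^{k/2}:=(q^{1/2})^k$); other $(\cdot)^{1/2}$ are fixed square roots in $\mathbb{F}$. $[n]_q=\frac{q^n-q^{-n}}{q-q^{-1}}$, $c(t)=t-t^{-1}$, $\tfrac12\mathbb{N}^+=\{\tfrac12,1,\tfrac32,\dots\}$, $t$ an indeterminate, $\otimes$ Kronecker product. Leg notation: for factors $\mathbb{F}^{n_1}\otimes\mathbb{F}^{n_2}\otimes\mathbb{F}^{n_3}$, $X_{12}=X\otimes I_{n_3}$, $X_{23}=I_{n_1}\otimes X$, $X_{13}=P(X\otimes I_{n_2})P$ with $P$ the flip of factors 2,3; for non-square $Y$, $Y_{12}=Y\otimes I_{n_3}$, $Y_{23}=I_{n_1}\otimes Y$. For $j\in\tfrac12\mathbb{N}^+$: $\mathcal{E}^{(j+\frac12)}$ is $(4j+2)\times(2j+2)$ with only nonzero entries $\mathcal{E}_{(a,a)}=\big(\frac{[2j+2-a]_q}{[2j+1]_q}\big)^{1/2}$, $\mathcal{E}_{(a+2j+1,a+1)}=\big(\frac{[a]_q}{[2j+1]_q}\big)^{1/2}$ ($1\le a\le 2j+1$); $\mathcal{F}^{(j+\frac12)}$ is $(2j+2)\times(4j+2)$ with only nonzero entries $\mathcal{F}_{(a,a)}=\frac{([2j+2-a]_q[2j+1]_q)^{1/2}}{[2j+2-a]_q+[a-1]_q}$,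 $\mathcal{F}_{(a+1,a+2j+1)}=\frac{([a]_q[2j+1]_q)^{1/2}}{[2j+1-a]_q+[a]_q}$ ($1\le a\le 2j+1$). $R^{(\frac12,\frac12)}(t)$ is the $4\times4$ matrix with rows $(c(qt),0,0,0),(0,c(t),c(q),0),(0,c(q),c(t),0),(0,0,0,c(qt))$; recursively $R^{(\frac12,j+\frac12)}(t)=\mathcal{F}^{(j+\frac12)}_{23}R^{(\frac12,j)}_{13}(q^{-1/2}t)R^{(\frac12,\frac12)}_{12}(q^{j}t)\mathcal{E}^{(j+\frac12)}_{23}$ (factor sizes $2,2,2j+1$) and $R^{(j_1+\frac12,j_2)}(t)=\mathcal{F}^{(j_1+\frac12)}_{12}R^{(\frac12,j_2)}_{13}(q^{-j_1}t)R^{(j_1,j_2)}_{23}(q^{1/2}t)\mathcal{E}^{(j_1+\frac12)}_{12}$ (factor sizes $2,2j_1+1,2j_2+1$). $\widehat R^{(j_1,j_2)}=q^{2\,\mathrm{diag}(j_1,\dots,-j_1)\otimes\mathrm{diag}(j_2,\dots,-j_2)}$ (diagonal with entries $q^{2\alpha\beta}$). *)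

theory Defs
  imports "Jordan_Normal_Form.Matrix"
          "HOL-Computational_Algebra.Polynomial"
          "HOL-Computational_Algebra.Fraction_Field"
begin

type_synonym 'a ratfun = "'a poly fract"

definition cst :: "'a::field \<Rightarrow> 'a ratfun" where
  "cst c = Fract [:c:] 1"

definition indet :: "'a::field ratfun" where
  "indet = Fract [:0, 1:] 1"

definition qnum :: "'a::field \<Rightarrow> int \<Rightarrow> 'a" where
  "qnum q n = (q powi n - q powi (-n)) / (q - inverse q)"

definition cfun :: "'b::field \<Rightarrow> 'b" where
  "cfun x = x - inverse x"

section \<open>Kronecker product and leg notation (0-based indices)\<close>

definition kron :: "'b::semiring_1 mat \<Rightarrow> 'b mat \<Rightarrow> 'b mat" where
  "kron A B = mat (dim_row A * dim_row B) (dim_col A * dim_col B)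
     (\<lambda>(i,j). A $$ (i div dim_row B, j div dim_col B) * B $$ (i mod dim_row B, j mod dim_col B))"

text \<open>Permutation matrix F^n1 (x) F^n2 (x) F^n3 -> F^n1 (x) F^n3 (x) F^n2 (flip of factors 2,3).\<close>
definition flip23 :: "nat \<Rightarrow> nat \<Rightarrow> nat \<Rightarrow> 'b::semiring_1 mat" where
  "flip23 n1 n2 n3 = mat (n1*n3*n2) (n1*n2*n3)
     (\<lambda>(r,k). if r div (n3*n2) = k div (n2*n3) \<and> r mod n2 = (k div n3) mod n2
                 \<and> (r div n2) mod n3 = k mod n3 then 1 else 0)"

definition leg12 :: "'b::semiring_1 mat \<Rightarrow> nat \<Rightarrow> 'b mat" where
  "leg12 X n3 = kron X (1\<^sub>m n3)"

definition leg23 :: "nat \<Rightarrow> 'b::semiring_1 mat \<Rightarrow> 'b mat" where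
  "leg23 n1 X = kron (1\<^sub>m n1) X"

definition leg13 :: "nat \<Rightarrow> nat \<Rightarrow> nat \<Rightarrow> 'b::semiring_1 mat \<Rightarrow> 'b mat" where
  "leg13 n1 n2 n3 X = flip23 n1 n3 n2 * kron X (1\<^sub>m n2) * flip23 n1 n2 n3"

section \<open>The matrices E and F (n = 2j; Emat n = E^(j+1/2))\<close>

text \<open>q: the parameter, sr: the fixed square-root function of the field.\<close>

definition Emat :: "'a::field \<Rightarrow> ('a \<Rightarrow> 'a) \<Rightarrow> nat \<Rightarrow> 'a mat" where
  "Emat q sr n = mat (2*n+2) (n+2) (\<lambda>(i,k).
     if i \<le> n \<and> k = i then sr (qnum q (int n + 1 - int i) / qnum q (int n + 1))
     else if n+1 \<le> i \<and> i \<le> 2*n+1 \<and> k = i - n then sr (qnum q (int k) / qnum q (int n + 1))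
     else 0)"

definition Fmat :: "'a::field \<Rightarrow> ('a \<Rightarrow> 'a) \<Rightarrow> nat \<Rightarrow> 'a mat" where
  "Fmat q sr n = mat (n+2) (2*n+2) (\<lambda>(i,k).
     if k \<le> n \<and> i = k then
        sr (qnum q (int n + 1 - int k) * qnum q (int n + 1))
          / (qnum q (int n + 1 - int k) + qnum q (int k))
     else if n+1 \<le> k \<and> k \<le> 2*n+1 \<and> i = k - n then
        sr (qnum q (int i) * qnum q (int n + 1))
          / (qnum q (int n + 1 - int i) + qnum q (int i))
     else 0)"

section \<open>R-matrices over F(t); s is the fixed square root of q\<close>

definition Rbase :: "'a::field \<Rightarrow> 'a ratfun \<Rightarrow> 'a ratfun mat" where
  "Rbase q t = mat_of_rows_list 4
     [[cfun (cst q * t), 0, 0, 0],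
      [0, cfun t, cfun (cst q), 0],
      [0, cfun (cst q), cfun t, 0],
      [0, 0, 0, cfun (cst q * t)]]"

text \<open>Rhalf q s sr n t = R^(1/2, n/2)(t), for n \<ge> 1.\<close>
fun Rhalf :: "'a::field \<Rightarrow> 'a \<Rightarrow> ('a \<Rightarrow> 'a) \<Rightarrow> nat \<Rightarrow> 'a ratfun \<Rightarrow> 'a ratfun mat" where
  "Rhalf q s sr 0 t = 0\<^sub>m 0 0"
| "Rhalf q s sr (Suc 0) t = Rbase q t"
| "Rhalf q s sr (Suc (Suc m)) t =
     leg23 2 (map_mat cst (Fmat q sr (Suc m)))
   * leg13 2 2 (Suc m + 1) (Rhalf q s sr (Suc m) (inverse (cst s) * t))
   * leg12 (Rbase q (cst s ^ Suc m * t)) (Suc m + 1)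
   * leg23 2 (map_mat cst (Emat q sr (Suc m)))"

text \<open>Rmat q s sr n1 n2 t = R^(n1/2, n2/2)(t), for n1, n2 \<ge> 1.\<close>
fun Rmat :: "'a::field \<Rightarrow> 'a \<Rightarrow> ('a \<Rightarrow> 'a) \<Rightarrow> nat \<Rightarrow> nat \<Rightarrow> 'a ratfun \<Rightarrow> 'a ratfun mat" where
  "Rmat q s sr 0 n2 t = 0\<^sub>m 0 0"
| "Rmat q s sr (Suc 0) n2 t = Rhalf q s sr n2 t"
| "Rmat q s sr (Suc (Suc m)) n2 t =
     leg12 (map_mat cst (Fmat q sr (Suc m))) (n2 + 1)
   * leg13 2 (Suc m + 1) (n2 + 1) (Rhalf q s sr n2 (inverse (cst s) ^ Suc m * t))
   * leg23 2 (Rmat q s sr (Suc m) n2 (cst s * t))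
   * leg12 (map_mat cst (Emat q sr (Suc m))) (n2 + 1)"

text \<open>Rhat s n1 n2 = q^(2 diag(j1..-j1) (x) diag(j2..-j2)), j_i = n_i/2,
  entries q^(2 alpha beta) = s^(4 alpha beta) = s^((n1-2a)(n2-2b)).\<close>
definition Rhat :: "'a::field \<Rightarrow> nat \<Rightarrow> nat \<Rightarrow> 'a ratfun mat" where
  "Rhat s n1 n2 = mat ((n1+1)*(n2+1)) ((n1+1)*(n2+1)) (\<lambda>(i,k).
     if i = k then cst (s powi ((int n1 - 2 * int (i div (n2+1))) * (int n2 - 2 * int (i mod (n2+1)))))
     else 0)"

end

theory Submission
  imports Defs
begin

text \<open>
  Index the standard basis of \<open>F^d1 \<otimes> F^d2 \<otimes> F^d3\<close> by digit triples \<open>(a, b, c)\<close>.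
  The legs of \<open>R-hat\<close> are diagonal, e.g. \<open>R-hat_13 R-hat_23\<close> has the entry
  \<open>s^((n1-2a)(n3-2c) + (n2-2b)(n3-2c)) = s^((n1+n2-2(a+b))(n3-2c))\<close> at \<open>(a, b, c)\<close>,
  which depends only on \<open>a + b\<close> and \<open>c\<close>. On the other hand every \<open>R^(j1,j2)(t)\<close> conserves
  weight: its nonzero entries only connect basis vectors with the same index sum. This holds for
  \<open>R^(1/2,1/2)\<close>, \<open>E\<close> and \<open>F\<close>, and passes to legs and products, hence along the fusion
  recursion. So \<open>R_12\<close> only connects indices with equal \<open>a + b\<close> and equal \<open>c\<close>, where the
  diagonal \<open>R-hat_13 R-hat_23\<close> takes equal values, and therefore commutes with it. The other
  identities follow in the same way after permuting the legs.
\<close>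

section \<open>Mixed-radix index arithmetic\<close>

lemma cst_0 [simp]: "cst 0 = 0"
  by (simp add: cst_def fract_collapse)

lemma cst_mult: "cst (x * y) = cst x * cst y"
  by (simp add: cst_def mult_fract mult.commute)

lemma mult_add_less_mult:
  fixes a b m n :: nat
  assumes "a < m" "b < n"
  shows "a * n + b < m * n"
proof -
  have "a * n + b < (a + 1) * n" using assms(2) by simp
  also have "\<dots> \<le> m * n" using assms(1) by (intro mult_right_mono) auto
  finally show ?thesis .
qed

lemma mod_mult_div_eq_div_mod: "(i::nat) mod (m * n) div n = i div n mod m"
  using mod_mult2_eq[of i n m] by (cases "n = 0") (simp_all add: mult.commute)

lemma div_mult_eq_div_div: "(i::nat) div (m * n) = i div n div m"
  by (metis div_mult2_eq mult.commute)

lemma div_mod_mult_add_mod: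
  fixes a i n :: nat
  assumes "0 < n"
  shows "(a * n + i mod n) div n = a" "(a * n + i mod n) mod n = i mod n"
  using assms by simp_all

lemma mult_add_mod_eq_iff:
  fixes a b i k n :: nat
  assumes "0 < n"
  shows "a * n + i mod n = b * n + k mod n \<longleftrightarrow> a = b \<and> i mod n = k mod n"
proof
  assume h: "a * n + i mod n = b * n + k mod n"
  from arg_cong[OF h, of "\<lambda>x. x div n"] arg_cong[OF h, of "\<lambda>x. x mod n"]
  show "a = b \<and> i mod n = k mod n" using assms by simp
qed simp

lemma nat_eq_iff_digits3:
  fixes i k n2 n3 :: nat
  shows "i = k \<longleftrightarrow> i div (n2*n3) = k div (n2*n3) \<and> i div n3 mod n2 = k div n3 mod n2 \<and> i mod n3 = k mod n3"
proof (intro iffI; (elim conjE)?)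
  have mod: "j mod (n2*n3) = j div n3 mod n2 * n3 + j mod n3" for j :: nat
    using mod_mult2_eq[of j n3 n2] by (simp add: mult.commute)
  assume "i div (n2*n3) = k div (n2*n3)" "i div n3 mod n2 = k div n3 mod n2" "i mod n3 = k mod n3"
  then have "i div (n2*n3) = k div (n2*n3)" "i mod (n2*n3) = k mod (n2*n3)"
    unfolding mod by simp_all
  then show "i = k" by (metis div_mult_mod_eq)
qed simp

lemma div_mult_add_mod_less:
  fixes i n1 n2 n3 :: nat
  assumes "i < n1*n2*n3"
  shows "i div (n2*n3) * n3 + i mod n3 < n1*n3"
proof -
  have "i div (n2*n3) < n1" using assms by (intro less_mult_imp_div_less) (simp add: mult.assoc)
  moreover have "0 < n3" using assms by (auto intro!: gr0I)
  ultimately show ?thesis by (intro mult_add_less_mult) simp_all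
qed

section \<open>Entries of legs\<close>

lemma kron_dims [simp]:
  "dim_row (kron A B) = dim_row A * dim_row B" "dim_col (kron A B) = dim_col A * dim_col B"
  by (simp_all add: kron_def)

lemma index_kron:
  "i < dim_row A * dim_row B \<Longrightarrow> k < dim_col A * dim_col B \<Longrightarrow>
   kron A B $$ (i,k) = A $$ (i div dim_row B, k div dim_col B) * B $$ (i mod dim_row B, k mod dim_col B)"
  by (simp add: kron_def)

lemma leg12_dims [simp]: "dim_row (leg12 X n) = dim_row X * n" "dim_col (leg12 X n) = dim_col X * n"
  unfolding leg12_def by simp_all

lemma leg23_dims [simp]: "dim_row (leg23 n X) = n * dim_row X" "dim_col (leg23 n X) = n * dim_col X"
  unfolding leg23_def by simp_all

lemma flip23_dims [simp]:
  "dim_row (flip23 n1 n2 n3) = n1*n3*n2" "dim_col (flip23 n1 n2 n3) = n1*n2*n3"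
  unfolding flip23_def by (rule dim_row_mat, rule dim_col_mat)

lemma leg13_dims [simp]: "dim_row (leg13 n1 n2 n3 X) = n1*n2*n3" "dim_col (leg13 n1 n2 n3 X) = n1*n2*n3"
  unfolding leg13_def by simp_all

lemma index_leg12:
  fixes X :: "'b::semiring_1 mat"
  assumes X: "X \<in> carrier_mat r c" and i: "i < r*n" and k: "k < c*n"
  shows "leg12 X n $$ (i,k) = (if i mod n = k mod n then X $$ (i div n, k div n) else 0)"
proof -
  have "0 < n" using i by (auto intro!: gr0I)
  have "leg12 X n $$ (i,k) = X $$ (i div n, k div n) * 1\<^sub>m n $$ (i mod n, k mod n)"
    unfolding leg12_def using X i k by (subst index_kron) auto
  then show ?thesis using \<open>0 < n\<close> by simp
qed

lemma index_leg23:
  fixes X :: "'b::semiring_1 mat"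
  assumes X: "X \<in> carrier_mat r c" and i: "i < n*r" and k: "k < n*c"
  shows "leg23 n X $$ (i,k) = (if i div r = k div c then X $$ (i mod r, k mod c) else 0)"
proof -
  have "i div r < n" "k div c < n"
    using i k by (simp_all add: less_mult_imp_div_less mult.commute)
  have "leg23 n X $$ (i,k) = 1\<^sub>m n $$ (i div r, k div c) * X $$ (i mod r, k mod c)"
    unfolding leg23_def using X i k by (subst index_kron) auto
  then show ?thesis using \<open>i div r < n\<close> \<open>k div c < n\<close> by simp
qed

text \<open>\<open>swap23 n2 n3\<close> sends the index of \<open>e_a \<otimes> e_b \<otimes> e_c\<close> in \<open>F^n1 \<otimes> F^n2 \<otimes> F^n3\<close> to
  that of \<open>e_a \<otimes> e_c \<otimes> e_b\<close> in \<open>F^n1 \<otimes> F^n3 \<otimes> F^n2\<close>; \<open>flip23\<close> is its permutation matrix.\<close>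

definition swap23 :: "nat \<Rightarrow> nat \<Rightarrow> nat \<Rightarrow> nat" where
  "swap23 n2 n3 i = (i div (n2*n3) * n3 + i mod n3) * n2 + i div n3 mod n2"

lemma swap23_less:
  assumes "i < n1*n2*n3"
  shows "swap23 n2 n3 i < n1*n3*n2"
proof -
  have "i div (n2*n3) < n1" using assms by (intro less_mult_imp_div_less) (simp add: mult.assoc)
  moreover have "0 < n2" "0 < n3" using assms by (auto intro!: gr0I)
  ultimately show ?thesis unfolding swap23_def by (intro mult_add_less_mult) simp_all
qed

lemma swap23_div: "0 < n2 \<Longrightarrow> swap23 n2 n3 i div n2 = i div (n2*n3) * n3 + i mod n3"
  by (simp add: swap23_def)

lemma swap23_mod: "0 < n2 \<Longrightarrow> swap23 n2 n3 i mod n2 = i div n3 mod n2"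
  by (simp add: swap23_def)

lemma flip23_condition_iff:
  assumes "0 < n2" "0 < n3"
  shows "(r div (n3*n2) = k div (n2*n3) \<and> r mod n2 = k div n3 mod n2 \<and> r div n2 mod n3 = k mod n3)
     \<longleftrightarrow> r = swap23 n2 n3 k"
proof
  assume h: "r div (n3*n2) = k div (n2*n3) \<and> r mod n2 = k div n3 mod n2 \<and> r div n2 mod n3 = k mod n3"
  have "r = (r div n2 div n3 * n3 + r div n2 mod n3) * n2 + r mod n2" by simp
  then show "r = swap23 n2 n3 k" using h by (simp add: swap23_def div_mult_eq_div_div)
next
  assume "r = swap23 n2 n3 k"
  then show "r div (n3*n2) = k div (n2*n3) \<and> r mod n2 = k div n3 mod n2 \<and> r div n2 mod n3 = k mod n3"
    using assms by (simp add: swap23_div swap23_mod div_mult_eq_div_div)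
qed

lemma index_flip23:
  assumes "r < n1*n3*n2" "k < n1*n2*n3"
  shows "flip23 n1 n2 n3 $$ (r,k) = (if r = swap23 n2 n3 k then 1 else 0)"
proof -
  have "0 < n2" "0 < n3" using assms(2) by (auto intro!: gr0I)
  then show ?thesis using assms flip23_condition_iff[of n2 n3 r k] unfolding flip23_def
    by (subst index_mat(1)) auto
qed

lemma index_flip23_inv:
  assumes "r < n1*n2*n3" "k < n1*n3*n2"
  shows "flip23 n1 n3 n2 $$ (r,k) = (if k = swap23 n2 n3 r then 1 else 0)"
proof -
  have "0 < n2" "0 < n3" using assms(1) by (auto intro!: gr0I)
  then show ?thesis using assms flip23_condition_iff[of n2 n3 k r] unfolding flip23_def
    by (subst index_mat(1)) (auto simp: mult.commute mult.left_commute)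
qed

lemma index_mult_unit_row:
  fixes A :: "'b::semiring_1 mat"
  assumes "A \<in> carrier_mat n m" "B \<in> carrier_mat m l" "i < n" "j < l" "\<sigma> < m"
    and "\<And>k. k < m \<Longrightarrow> A $$ (i,k) = (if k = \<sigma> then 1 else 0)"
  shows "(A * B) $$ (i,j) = B $$ (\<sigma>,j)"
proof -
  have "(A * B) $$ (i,j) = (\<Sum>k\<in>{0..<m}. A $$ (i,k) * B $$ (k,j))"
    using assms by (simp add: scalar_prod_def)
  also have "\<dots> = (\<Sum>k\<in>{0..<m}. if k = \<sigma> then B $$ (k,j) else 0)"
    using assms(6) by (intro sum.cong) auto
  finally show ?thesis using assms(5) by simp
qed

lemma index_mult_unit_col:
  fixes B :: "'b::semiring_1 mat"
  assumes "A \<in> carrier_mat n m" "B \<in> carrier_mat m l" "i < n" "j < l" "\<sigma> < m"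
    and "\<And>k. k < m \<Longrightarrow> B $$ (k,j) = (if k = \<sigma> then 1 else 0)"
  shows "(A * B) $$ (i,j) = A $$ (i,\<sigma>)"
proof -
  have "(A * B) $$ (i,j) = (\<Sum>k\<in>{0..<m}. A $$ (i,k) * B $$ (k,j))"
    using assms by (simp add: scalar_prod_def)
  also have "\<dots> = (\<Sum>k\<in>{0..<m}. if k = \<sigma> then A $$ (i,k) else 0)"
    using assms(6) by (intro sum.cong) auto
  finally show ?thesis using assms(5) by simp
qed

lemma index_leg13:
  fixes X :: "'b::semiring_1 mat"
  assumes X: "X \<in> carrier_mat (n1*n3) (n1*n3)" and i: "i < n1*n2*n3" and k: "k < n1*n2*n3"
  shows "leg13 n1 n2 n3 X $$ (i,k) = (if i div n3 mod n2 = k div n3 mod n2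
     then X $$ (i div (n2*n3) * n3 + i mod n3, k div (n2*n3) * n3 + k mod n3) else 0)"
proof -
  have "0 < n2" using i by (auto intro!: gr0I)
  let ?P = "flip23 n1 n3 n2 :: 'b mat" and ?K = "kron X (1\<^sub>m n2)" and ?Q = "flip23 n1 n2 n3 :: 'b mat"
  have P: "?P \<in> carrier_mat (n1*n2*n3) (n1*n3*n2)" and Q: "?Q \<in> carrier_mat (n1*n3*n2) (n1*n2*n3)"
    by (intro carrier_matI; simp)+
  have K: "?K \<in> carrier_mat (n1*n3*n2) (n1*n3*n2)" using X by (intro carrier_matI) auto
  have "leg13 n1 n2 n3 X $$ (i,k) = (?P * ?K * ?Q) $$ (i,k)" by (simp add: leg13_def)
  also have "\<dots> = (?P * ?K) $$ (i, swap23 n2 n3 k)"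
    using P K Q i k swap23_less[OF k]
    by (intro index_mult_unit_col[of _ _ "n1*n3*n2"]) (auto simp: index_flip23)
  also have "\<dots> = ?K $$ (swap23 n2 n3 i, swap23 n2 n3 k)"
    using P K i k swap23_less[OF i] swap23_less[OF k]
    by (intro index_mult_unit_row[of _ _ "n1*n3*n2"]) (auto simp: index_flip23_inv)
  also have "\<dots> = X $$ (swap23 n2 n3 i div n2, swap23 n2 n3 k div n2)
                 * 1\<^sub>m n2 $$ (swap23 n2 n3 i mod n2, swap23 n2 n3 k mod n2)"
    using X swap23_less[OF i] swap23_less[OF k] by (subst index_kron) auto
  finally show ?thesis using \<open>0 < n2\<close> by (simp add: swap23_div swap23_mod)
qed

lemma mat_diag_dims [simp]: "dim_row (mat_diag n f) = n" "dim_col (mat_diag n f) = n"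
  using carrier_matD[OF mat_diag_dim] by auto

lemma index_mat_diag: "i < n \<Longrightarrow> j < n \<Longrightarrow> mat_diag n f $$ (i,j) = (if i = j then f j else 0)"
  unfolding mat_diag_def by simp

lemma leg12_mat_diag: "leg12 (mat_diag m f) n = mat_diag (m*n) (\<lambda>i. f (i div n))"
proof (rule eq_matI)
  fix i k assume "i < dim_row (mat_diag (m*n) (\<lambda>i. f (i div n)))" "k < dim_col (mat_diag (m*n) (\<lambda>i. f (i div n)))"
  then have i: "i < m*n" and k: "k < m*n" by simp_all
  then have "i div n < m" "k div n < m" by (simp_all add: less_mult_imp_div_less)
  moreover have "i = k \<longleftrightarrow> i div n = k div n \<and> i mod n = k mod n"
    by (metis div_mult_mod_eq)
  ultimately show "leg12 (mat_diag m f) n $$ (i,k) = mat_diag (m*n) (\<lambda>i. f (i div n)) $$ (i,k)"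
    using i k by (auto simp: index_leg12[OF mat_diag_dim] index_mat_diag)
qed simp_all

lemma leg23_mat_diag: "leg23 m (mat_diag n f) = mat_diag (m*n) (\<lambda>i. f (i mod n))"
proof (rule eq_matI)
  fix i k assume "i < dim_row (mat_diag (m*n) (\<lambda>i. f (i mod n)))" "k < dim_col (mat_diag (m*n) (\<lambda>i. f (i mod n)))"
  then have i: "i < m*n" and k: "k < m*n" by simp_all
  then have "i mod n < n" "k mod n < n" by (auto intro!: mod_less_divisor gr0I)
  moreover have "i = k \<longleftrightarrow> i div n = k div n \<and> i mod n = k mod n"
    by (metis div_mult_mod_eq)
  ultimately show "leg23 m (mat_diag n f) $$ (i,k) = mat_diag (m*n) (\<lambda>i. f (i mod n)) $$ (i,k)"
    using i k by (auto simp: index_leg23[OF mat_diag_dim] index_mat_diag)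
qed simp_all

lemma leg13_mat_diag:
  "leg13 n1 n2 n3 (mat_diag (n1*n3) f) = mat_diag (n1*n2*n3) (\<lambda>i. f (i div (n2*n3) * n3 + i mod n3))"
  (is "_ = mat_diag _ ?g")
proof (rule eq_matI)
  fix i k assume "i < dim_row (mat_diag (n1*n2*n3) ?g)" "k < dim_col (mat_diag (n1*n2*n3) ?g)"
  then have i: "i < n1*n2*n3" and k: "k < n1*n2*n3" by simp_all
  then have "0 < n3" by (auto intro!: gr0I)
  then have "i = k \<longleftrightarrow> i div n3 mod n2 = k div n3 mod n2 \<and>
                     i div (n2*n3) * n3 + i mod n3 = k div (n2*n3) * n3 + k mod n3"
    using nat_eq_iff_digits3[of i k n2 n3] mult_add_mod_eq_iff[of n3 "i div (n2*n3)" i "k div (n2*n3)" k]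
    by blast
  then show "leg13 n1 n2 n3 (mat_diag (n1*n3) f) $$ (i,k) = mat_diag (n1*n2*n3) ?g $$ (i,k)"
    using i k div_mult_add_mod_less[OF i] div_mult_add_mod_less[OF k]
    by (auto simp: index_leg13[OF mat_diag_dim] index_mat_diag)
qed simp_all

section \<open>Weight-preserving matrices\<close>

definition weight_preserving :: "(nat \<Rightarrow> 'w) \<Rightarrow> (nat \<Rightarrow> 'w) \<Rightarrow> 'b::zero mat \<Rightarrow> bool" where
  "weight_preserving wr wc A \<longleftrightarrow>
     (\<forall>i < dim_row A. \<forall>k < dim_col A. A $$ (i,k) \<noteq> 0 \<longrightarrow> wr i = wc k)"

lemma weight_preservingI:
  "(\<And>i k. i < dim_row A \<Longrightarrow> k < dim_col A \<Longrightarrow> A $$ (i,k) \<noteq> 0 \<Longrightarrow> wr i = wc k)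
   \<Longrightarrow> weight_preserving wr wc A"
  unfolding weight_preserving_def by blast

lemma weight_preservingD:
  "weight_preserving wr wc A \<Longrightarrow> i < dim_row A \<Longrightarrow> k < dim_col A \<Longrightarrow> A $$ (i,k) \<noteq> 0
   \<Longrightarrow> wr i = wc k"
  unfolding weight_preserving_def by blast

lemma weight_preserving_mult:
  fixes A B :: "'b::semiring_0 mat"
  assumes A: "weight_preserving wr w A" and B: "weight_preserving w wc B"
    and dims: "dim_col A = dim_row B"
  shows "weight_preserving wr wc (A * B)"
proof (rule weight_preservingI)
  fix i k assume "i < dim_row (A * B)" "k < dim_col (A * B)" and nz: "(A * B) $$ (i,k) \<noteq> 0"
  then have i: "i < dim_row A" and k: "k < dim_col B" by simp_all
  have "(A * B) $$ (i,k) = (\<Sum>j\<in>{0..<dim_row B}. A $$ (i,j) * B $$ (j,k))"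
    using i k dims by (simp add: scalar_prod_def)
  with nz obtain j where j: "j < dim_row B" and "A $$ (i,j) * B $$ (j,k) \<noteq> 0"
    by (metis (no_types, lifting) atLeastLessThan_iff sum.neutral)
  then have "A $$ (i,j) \<noteq> 0" "B $$ (j,k) \<noteq> 0" by auto
  then show "wr i = wc k"
    using weight_preservingD[OF A i] weight_preservingD[OF B _ k] j dims by simp
qed

lemma weight_preserving_map_mat:
  "weight_preserving wr wc A \<Longrightarrow> f 0 = 0 \<Longrightarrow> weight_preserving wr wc (map_mat f A)"
  unfolding weight_preserving_def by (auto, metis)

lemma weight_preserving_leg12:
  fixes X :: "'b::semiring_1 mat"
  assumes X: "X \<in> carrier_mat r c" and wp: "weight_preserving wr wc X"
  shows "weight_preserving (\<lambda>i. h (wr (i div n)) (i mod n)) (\<lambda>k. h (wc (k div n)) (k mod n)) (leg12 X n)"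
proof (rule weight_preservingI)
  fix i k assume "i < dim_row (leg12 X n)" "k < dim_col (leg12 X n)" and nz: "leg12 X n $$ (i,k) \<noteq> 0"
  then have i: "i < r*n" and k: "k < c*n" using X by auto
  then have "i div n < r" "k div n < c" by (simp_all add: less_mult_imp_div_less)
  moreover have "i mod n = k mod n" "X $$ (i div n, k div n) \<noteq> 0"
    using nz unfolding index_leg12[OF X i k] by (auto split: if_splits)
  ultimately show "h (wr (i div n)) (i mod n) = h (wc (k div n)) (k mod n)"
    using weight_preservingD[OF wp] X by auto
qed

lemma weight_preserving_leg23:
  fixes X :: "'b::semiring_1 mat"
  assumes X: "X \<in> carrier_mat r c" and wp: "weight_preserving wr wc X"
  shows "weight_preserving (\<lambda>i. h (i div r) (wr (i mod r))) (\<lambda>k. h (k div c) (wc (k mod c))) (leg23 n X)"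
proof (rule weight_preservingI)
  fix i k assume "i < dim_row (leg23 n X)" "k < dim_col (leg23 n X)" and nz: "leg23 n X $$ (i,k) \<noteq> 0"
  then have i: "i < n*r" and k: "k < n*c" using X by auto
  then have "i mod r < r" "k mod c < c" by (auto intro!: mod_less_divisor gr0I)
  moreover have "i div r = k div c" "X $$ (i mod r, k mod c) \<noteq> 0"
    using nz unfolding index_leg23[OF X i k] by (auto split: if_splits)
  ultimately show "h (i div r) (wr (i mod r)) = h (k div c) (wc (k mod c))"
    using weight_preservingD[OF wp] X by auto
qed

lemma weight_preserving_leg13:
  fixes X :: "'b::semiring_1 mat"
  assumes X: "X \<in> carrier_mat (n1*n3) (n1*n3)" and wp: "weight_preserving wr wc X"
  shows "weight_preserving (\<lambda>i. h (wr (i div (n2*n3) * n3 + i mod n3)) (i div n3 mod n2))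
                           (\<lambda>k. h (wc (k div (n2*n3) * n3 + k mod n3)) (k div n3 mod n2))
                           (leg13 n1 n2 n3 X)"
proof (rule weight_preservingI)
  fix i k assume "i < dim_row (leg13 n1 n2 n3 X)" "k < dim_col (leg13 n1 n2 n3 X)"
    and nz: "leg13 n1 n2 n3 X $$ (i,k) \<noteq> 0"
  then have i: "i < n1*n2*n3" and k: "k < n1*n2*n3" by simp_all
  have "i div n3 mod n2 = k div n3 mod n2"
    and "X $$ (i div (n2*n3) * n3 + i mod n3, k div (n2*n3) * n3 + k mod n3) \<noteq> 0"
    using nz unfolding index_leg13[OF X i k] by (auto split: if_splits)
  then show "h (wr (i div (n2*n3) * n3 + i mod n3)) (i div n3 mod n2) =
             h (wc (k div (n2*n3) * n3 + k mod n3)) (k div n3 mod n2)"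
    using weight_preservingD[OF wp] X div_mult_add_mod_less[OF i] div_mult_add_mod_less[OF k] by auto
qed

text \<open>For the index \<open>i = a * n + b\<close> of \<open>e_a \<otimes> e_b\<close>, \<open>index_sum n i = a + b\<close>; the weight of
  that basis vector of \<open>V^j1 \<otimes> V^j2\<close> is \<open>j1 + j2 - (a + b)\<close>.\<close>

definition index_sum :: "nat \<Rightarrow> nat \<Rightarrow> nat" where
  "index_sum n i = i div n + i mod n"

definition index_sum3 :: "nat \<Rightarrow> nat \<Rightarrow> nat \<Rightarrow> nat" where
  "index_sum3 n2 n3 i = i div (n2*n3) + i div n3 mod n2 + i mod n3"

lemma index_sum_div: "index_sum m (i div n) = i div (m*n) + i div n mod m"
  by (simp add: index_sum_def div_mult_eq_div_div)

lemma index_sum_mod: "index_sum n (i mod (m*n)) = i div n mod m + i mod n"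
  by (simp add: index_sum_def mod_mult_div_eq_div_mod mod_mod_cancel)

lemma index_sum_div_mult_add_mod: "0 < n3 \<Longrightarrow> index_sum n3 (i div (n2*n3) * n3 + i mod n3) = i div (n2*n3) + i mod n3"
  by (simp add: index_sum_def)

lemma weight_preserving_leg12_index_sum:
  fixes X :: "'b::semiring_1 mat"
  assumes "X \<in> carrier_mat r c" "weight_preserving (index_sum m) (index_sum m) X"
  shows "weight_preserving (\<lambda>i. h (i div (m*n) + i div n mod m) (i mod n))
                           (\<lambda>i. h (i div (m*n) + i div n mod m) (i mod n)) (leg12 X n)"
  using weight_preserving_leg12[OF assms, of h n] by (simp only: index_sum_div)

lemma weight_preserving_leg23_index_sum:
  fixes X :: "'b::semiring_1 mat"
  assumes "X \<in> carrier_mat (m*n) (m*n)" "weight_preserving (index_sum n) (index_sum n) X"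
  shows "weight_preserving (\<lambda>i. h (i div (m*n)) (i div n mod m + i mod n))
                           (\<lambda>i. h (i div (m*n)) (i div n mod m + i mod n)) (leg23 n1 X)"
  using weight_preserving_leg23[OF assms, of h n1] by (simp only: index_sum_mod)

lemma weight_preserving_leg13_index_sum:
  fixes X :: "'b::semiring_1 mat"
  assumes "X \<in> carrier_mat (n1*n3) (n1*n3)" "weight_preserving (index_sum n3) (index_sum n3) X"
    and "0 < n3"
  shows "weight_preserving (\<lambda>i. h (i div (n2*n3) + i mod n3) (i div n3 mod n2))
                           (\<lambda>i. h (i div (n2*n3) + i mod n3) (i div n3 mod n2)) (leg13 n1 n2 n3 X)"
  using weight_preserving_leg13[OF assms(1,2), of h n2] \<open>0 < n3\<close>
  by (simp only: index_sum_div_mult_add_mod)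

lemma index_sum3_leg12: "index_sum m (i div n) + i mod n = index_sum3 m n i"
  by (simp add: index_sum_div index_sum3_def)

lemma index_sum3_leg23: "i div (m*n) + index_sum n (i mod (m*n)) = index_sum3 m n i"
  by (simp add: index_sum_mod index_sum3_def)

lemma index_sum3_leg13:
  "0 < n3 \<Longrightarrow> index_sum n3 (i div (n2*n3) * n3 + i mod n3) + i div n3 mod n2 = index_sum3 n2 n3 i"
  by (simp add: index_sum_div_mult_add_mod index_sum3_def)

lemma weight_preserving_leg12_index_sum3:
  fixes X :: "'b::semiring_1 mat"
  assumes "X \<in> carrier_mat r c" "weight_preserving (index_sum m) (index_sum m) X"
  shows "weight_preserving (index_sum3 m n) (index_sum3 m n) (leg12 X n)"
  using weight_preserving_leg12[OF assms, of "(+)" n] by (simp only: index_sum3_leg12)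

lemma weight_preserving_leg23_index_sum3:
  fixes X :: "'b::semiring_1 mat"
  assumes "X \<in> carrier_mat (m*n) (m*n)" "weight_preserving (index_sum n) (index_sum n) X"
  shows "weight_preserving (index_sum3 m n) (index_sum3 m n) (leg23 n1 X)"
  using weight_preserving_leg23[OF assms, of "(+)" n1] by (simp only: index_sum3_leg23)

lemma weight_preserving_leg13_index_sum3:
  fixes X :: "'b::semiring_1 mat"
  assumes "X \<in> carrier_mat (n1*n3) (n1*n3)" "weight_preserving (index_sum n3) (index_sum n3) X"
    and "0 < n3"
  shows "weight_preserving (index_sum3 n2 n3) (index_sum3 n2 n3) (leg13 n1 n2 n3 X)"
  using weight_preserving_leg13[OF assms(1,2), of "(+)" n2] \<open>0 < n3\<close> by (simp only: index_sum3_leg13)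

lemma commute_mat_diag:
  fixes A :: "'b::comm_semiring_1 mat"
  assumes A: "A \<in> carrier_mat n n" and wp: "weight_preserving f f A"
  shows "A * mat_diag n f = mat_diag n f * A"
proof -
  have "A $$ (i,j) * f j = f i * A $$ (i,j)" if "i < n" "j < n" for i j
    using weight_preservingD[OF wp] A that by (cases "A $$ (i,j) = 0") (auto simp: mult.commute)
  then show ?thesis
    unfolding mat_diag_mult_left[OF A] mat_diag_mult_right[OF A] by (intro cong_mat) auto
qed

lemma commute_mat_diag_mult:
  fixes A :: "'b::comm_semiring_1 mat"
  assumes A: "A \<in> carrier_mat n n" and wp: "weight_preserving (\<lambda>i. f i * g i) (\<lambda>i. f i * g i) A"
  shows "A * mat_diag n f * mat_diag n g = mat_diag n g * mat_diag n f * A"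
    and "A * mat_diag n g * mat_diag n f = mat_diag n f * mat_diag n g * A"
proof -
  have fg: "mat_diag n f * mat_diag n g = mat_diag n (\<lambda>i. f i * g i)"
    and gf: "mat_diag n (\<lambda>i. g i * f i) = mat_diag n (\<lambda>i. f i * g i)"
    by (simp_all add: mult.commute)
  have "A * mat_diag n (\<lambda>i. f i * g i) = mat_diag n (\<lambda>i. f i * g i) * A"
    by (rule commute_mat_diag[OF A wp])
  then show "A * mat_diag n f * mat_diag n g = mat_diag n g * mat_diag n f * A"
    and "A * mat_diag n g * mat_diag n f = mat_diag n f * mat_diag n g * A"
    using A by (simp_all add: assoc_mult_mat[OF A mat_diag_dim mat_diag_dim] fg gf)
qed

section \<open>The R-matrices conserve weight\<close>

lemma Rbase_carrier: "Rbase q t \<in> carrier_mat 4 4"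
  unfolding Rbase_def mat_of_rows_list_def carrier_mat_def by simp

lemma weight_preserving_Rbase: "weight_preserving (index_sum 2) (index_sum 2) (Rbase q t)"
proof (rule weight_preservingI)
  fix i k assume "i < dim_row (Rbase q t)" "k < dim_col (Rbase q t)" and nz: "Rbase q t $$ (i,k) \<noteq> 0"
  then have i: "i < 4" and k: "k < 4" using Rbase_carrier[of q t] by auto
  have "Rbase q t $$ (i,k) =
      [[cfun (cst q * t), 0, 0, 0],
       [0, cfun t, cfun (cst q), 0],
       [0, cfun (cst q), cfun t, 0],
       [0, 0, 0, cfun (cst q * t)]] ! i ! k"
    unfolding Rbase_def mat_of_rows_list_def using i k by (subst index_mat(1)) auto
  moreover have "i \<in> {0, 1, 2, 3}" "k \<in> {0, 1, 2, 3}" using i k by auto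
  ultimately show "index_sum 2 i = index_sum 2 k"
    using nz by (auto simp: index_sum_def numeral_eq_Suc)
qed

lemma Emat_carrier: "Emat q sr n \<in> carrier_mat (2*(n+1)) (n+2)"
  unfolding Emat_def carrier_mat_def by simp

lemma Fmat_carrier: "Fmat q sr n \<in> carrier_mat (n+2) (2*(n+1))"
  unfolding Fmat_def carrier_mat_def by simp

lemma weight_preserving_Emat: "weight_preserving (index_sum (n+1)) (\<lambda>k. k) (Emat q sr n)"
proof (rule weight_preservingI)
  fix i k assume "i < dim_row (Emat q sr n)" "k < dim_col (Emat q sr n)" and nz: "Emat q sr n $$ (i,k) \<noteq> 0"
  then have i: "i < 2*(n+1)" and k: "k < n+2" using Emat_carrier[of q sr n] by auto
  from nz have "i \<le> n \<and> k = i \<or> n+1 \<le> i \<and> k = i - n"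
    unfolding Emat_def using i k by (subst (asm) index_mat(1)) (auto split: if_splits)
  then show "index_sum (n+1) i = k"
    using i by (auto simp: index_sum_def le_div_geq le_mod_geq)
qed

lemma weight_preserving_Fmat: "weight_preserving (\<lambda>i. i) (index_sum (n+1)) (Fmat q sr n)"
proof (rule weight_preservingI)
  fix i k assume "i < dim_row (Fmat q sr n)" "k < dim_col (Fmat q sr n)" and nz: "Fmat q sr n $$ (i,k) \<noteq> 0"
  then have i: "i < n+2" and k: "k < 2*(n+1)" using Fmat_carrier[of q sr n] by auto
  from nz have "k \<le> n \<and> i = k \<or> n+1 \<le> k \<and> i = k - n"
    unfolding Fmat_def using i k by (subst (asm) index_mat(1)) (auto split: if_splits)
  then show "i = index_sum (n+1) k"
    using k by (auto simp: index_sum_def le_div_geq le_mod_geq)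
qed

lemma Rhalf_carrier: "0 < n \<Longrightarrow> Rhalf q s sr n t \<in> carrier_mat (2*(n+1)) (2*(n+1))"
proof (induction q s sr n t rule: Rhalf.induct)
  case (2 q s sr t)
  then show ?case using Rbase_carrier by simp
next
  case (3 q s sr m t)
  then show ?case
    using carrier_matD[OF Fmat_carrier[of q sr "Suc m"]] carrier_matD[OF Emat_carrier[of q sr "Suc m"]]
    by (intro carrier_matI) simp_all
qed simp

lemma weight_preserving_Rhalf:
  "0 < n \<Longrightarrow> weight_preserving (index_sum (n+1)) (index_sum (n+1)) (Rhalf q s sr n t)"
proof (induction q s sr n t rule: Rhalf.induct)
  case (2 q s sr t)
  then show ?case using weight_preserving_Rbase by (simp add: numeral_2_eq_2)
next
  case (3 q s sr m t)
  define N where "N = Suc m + 1"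
  let ?F = "map_mat cst (Fmat q sr (Suc m))" and ?E = "map_mat cst (Emat q sr (Suc m))"
    and ?X = "Rhalf q s sr (Suc m) (inverse (cst s) * t)" and ?B = "Rbase q (cst s ^ Suc m * t)"
  have F: "?F \<in> carrier_mat (N+1) (2*N)" and E: "?E \<in> carrier_mat (2*N) (N+1)"
    using Fmat_carrier[of q sr "Suc m"] Emat_carrier[of q sr "Suc m"] unfolding N_def by auto
  have X: "?X \<in> carrier_mat (2*N) (2*N)"
    using Rhalf_carrier[of "Suc m" q s sr "inverse (cst s) * t"] unfolding N_def by simp
  have wF0: "weight_preserving (\<lambda>i. i) (index_sum N) ?F"
    and wE0: "weight_preserving (index_sum N) (\<lambda>i. i) ?E"
    using weight_preserving_map_mat[OF weight_preserving_Fmat[of "Suc m" q sr], of cst]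
      weight_preserving_map_mat[OF weight_preserving_Emat[of "Suc m" q sr], of cst]
    unfolding N_def by simp_all
  have wF: "weight_preserving (index_sum (N+1)) (index_sum3 2 N) (leg23 2 ?F)"
    using weight_preserving_leg23[OF F wF0, of "(+)" 2]
    by (simp only: index_sum3_leg23 flip: index_sum_def)
  have wE: "weight_preserving (index_sum3 2 N) (index_sum (N+1)) (leg23 2 ?E)"
    using weight_preserving_leg23[OF E wE0, of "(+)" 2]
    by (simp only: index_sum3_leg23 flip: index_sum_def)
  have wX: "weight_preserving (index_sum3 2 N) (index_sum3 2 N) (leg13 2 2 N ?X)"
    using weight_preserving_leg13_index_sum3[OF X] "3.IH" unfolding N_def by simp
  have wB: "weight_preserving (index_sum3 2 N) (index_sum3 2 N) (leg12 ?B N)"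
    using weight_preserving_leg12_index_sum3[OF Rbase_carrier weight_preserving_Rbase] .
  have "Rhalf q s sr (Suc (Suc m)) t = leg23 2 ?F * leg13 2 2 N ?X * leg12 ?B N * leg23 2 ?E"
    by (simp add: N_def)
  also have "weight_preserving (index_sum (N+1)) (index_sum (N+1)) \<dots>"
    using carrier_matD[OF F] carrier_matD[OF E]
    by (intro weight_preserving_mult[OF weight_preserving_mult[OF weight_preserving_mult[OF wF wX] wB] wE])
      (simp_all add: carrier_matD[OF Rbase_carrier])
  finally show ?case unfolding N_def by simp
qed simp

lemma Rmat_carrier:
  "0 < n1 \<Longrightarrow> 0 < n2 \<Longrightarrow> Rmat q s sr n1 n2 t \<in> carrier_mat ((n1+1)*(n2+1)) ((n1+1)*(n2+1))"
proof (induction q s sr n1 n2 t rule: Rmat.induct)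
  case (2 q s sr n2 t)
  have "(Suc 0 + 1) * (n2 + 1) = 2 * (n2 + 1)" by simp
  then show ?case using Rhalf_carrier[OF "2.prems"(2)] by (simp only: Rmat.simps(2))
next
  case (3 q s sr m n2 t)
  then show ?case
    using carrier_matD[OF Fmat_carrier[of q sr "Suc m"]] carrier_matD[OF Emat_carrier[of q sr "Suc m"]]
    by (intro carrier_matI) simp_all
qed simp

lemma weight_preserving_Rmat:
  "0 < n1 \<Longrightarrow> 0 < n2 \<Longrightarrow>
   weight_preserving (index_sum (n2+1)) (index_sum (n2+1)) (Rmat q s sr n1 n2 t)"
proof (induction q s sr n1 n2 t rule: Rmat.induct)
  case (2 q s sr n2 t)
  then show ?case using weight_preserving_Rhalf by simp
next
  case (3 q s sr m n2 t)
  define M where "M = Suc m + 1"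
  define P where "P = n2 + 1"
  let ?F = "map_mat cst (Fmat q sr (Suc m))" and ?E = "map_mat cst (Emat q sr (Suc m))"
    and ?X = "Rhalf q s sr n2 (inverse (cst s) ^ Suc m * t)" and ?R = "Rmat q s sr (Suc m) n2 (cst s * t)"
  have F: "?F \<in> carrier_mat (M+1) (2*M)" and E: "?E \<in> carrier_mat (2*M) (M+1)"
    using Fmat_carrier[of q sr "Suc m"] Emat_carrier[of q sr "Suc m"] unfolding M_def by auto
  have X: "?X \<in> carrier_mat (2*P) (2*P)" using Rhalf_carrier "3.prems" unfolding P_def by auto
  have R: "?R \<in> carrier_mat (M*P) (M*P)"
    using Rmat_carrier[of "Suc m" n2 q s sr "cst s * t"] "3.prems" unfolding M_def P_def by simp
  have wF0: "weight_preserving (\<lambda>i. i) (index_sum M) ?F"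
    and wE0: "weight_preserving (index_sum M) (\<lambda>i. i) ?E"
    using weight_preserving_map_mat[OF weight_preserving_Fmat[of "Suc m" q sr], of cst]
      weight_preserving_map_mat[OF weight_preserving_Emat[of "Suc m" q sr], of cst]
    unfolding M_def by simp_all
  have wF: "weight_preserving (index_sum P) (index_sum3 M P) (leg12 ?F P)"
    using weight_preserving_leg12[OF F wF0, of "(+)" P]
    by (simp only: index_sum3_leg12 flip: index_sum_def)
  have wE: "weight_preserving (index_sum3 M P) (index_sum P) (leg12 ?E P)"
    using weight_preserving_leg12[OF E wE0, of "(+)" P]
    by (simp only: index_sum3_leg12 flip: index_sum_def)
  have "weight_preserving (index_sum P) (index_sum P) ?X"
    using weight_preserving_Rhalf "3.prems" unfolding P_def by simp
  then have wX: "weight_preserving (index_sum3 M P) (index_sum3 M P) (leg13 2 M P ?X)"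
    by (rule weight_preserving_leg13_index_sum3[OF X]) (simp add: P_def)
  have wR: "weight_preserving (index_sum3 M P) (index_sum3 M P) (leg23 2 ?R)"
    using weight_preserving_leg23_index_sum3[OF R] "3.IH" "3.prems" unfolding M_def P_def by simp
  have "Rmat q s sr (Suc (Suc m)) n2 t = leg12 ?F P * leg13 2 M P ?X * leg23 2 ?R * leg12 ?E P"
    by (simp add: M_def P_def)
  also have "weight_preserving (index_sum P) (index_sum P) \<dots>"
    using carrier_matD[OF F] carrier_matD[OF E] carrier_matD[OF R]
    by (intro weight_preserving_mult[OF weight_preserving_mult[OF weight_preserving_mult[OF wF wX] wR] wE])
      simp_all
  finally show ?case unfolding P_def .
qed simp

section \<open>The diagonal matrices R-hat\<close>

definition hat_entry :: "'a::field \<Rightarrow> nat \<Rightarrow> nat \<Rightarrow> nat \<Rightarrow> nat \<Rightarrow> 'a ratfun" where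
  "hat_entry s n1 n2 a b = cst (s powi ((int n1 - 2 * int a) * (int n2 - 2 * int b)))"

lemma hat_entry_swap: "hat_entry s n1 n2 a b = hat_entry s n2 n1 b a"
  by (simp add: hat_entry_def mult.commute)

lemma hat_entry_mult_left:
  assumes "s \<noteq> 0"
  shows "hat_entry s n1 m a c * hat_entry s n2 m b c = hat_entry s (n1 + n2) m (a + b) c"
proof -
  have exponent: "(int n1 - 2 * int a) * (int m - 2 * int c) + (int n2 - 2 * int b) * (int m - 2 * int c)
      = (int (n1 + n2) - 2 * int (a + b)) * (int m - 2 * int c)"
    by (simp add: algebra_simps)
  show ?thesis
    unfolding hat_entry_def cst_mult[symmetric] power_int_add[OF disjI1[OF assms], symmetric] exponent ..
qed

lemma hat_entry_mult_right:
  "s \<noteq> 0 \<Longrightarrow> hat_entry s n m1 a b * hat_entry s n m2 a c = hat_entry s n (m1 + m2) a (b + c)"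
  by (metis hat_entry_mult_left hat_entry_swap)

lemma Rhat_eq_mat_diag:
  "Rhat s n1 n2 = mat_diag ((n1+1)*(n2+1)) (\<lambda>i. hat_entry s n1 n2 (i div (n2+1)) (i mod (n2+1)))"
  unfolding Rhat_def mat_diag_def hat_entry_def by (rule cong_mat) auto

lemma leg12_Rhat:
  "leg12 (Rhat s n1 n2) n =
   mat_diag ((n1+1)*(n2+1)*n) (\<lambda>i. hat_entry s n1 n2 (i div ((n2+1)*n)) (i div n mod (n2+1)))"
  unfolding Rhat_eq_mat_diag leg12_mat_diag by (simp only: div_mult_eq_div_div)

lemma leg23_Rhat:
  "leg23 n (Rhat s n2 n3) =
   mat_diag (n*((n2+1)*(n3+1))) (\<lambda>i. hat_entry s n2 n3 (i div (n3+1) mod (n2+1)) (i mod (n3+1)))"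
  unfolding Rhat_eq_mat_diag leg23_mat_diag
  by (simp only: mod_mult_div_eq_div_mod mod_mod_cancel[OF dvd_triv_right])

lemma leg13_Rhat:
  "leg13 (n1+1) n (n3+1) (Rhat s n1 n3) =
   mat_diag ((n1+1)*n*(n3+1)) (\<lambda>i. hat_entry s n1 n3 (i div (n*(n3+1))) (i mod (n3+1)))"
proof -
  have "0 < n3 + 1" by simp
  then show ?thesis unfolding Rhat_eq_mat_diag leg13_mat_diag by (simp only: div_mod_mult_add_mod)
qed

theorem lemma5p4:
  fixes q s :: "'a::field_char_0" and sr :: "'a \<Rightarrow> 'a" and n1 n2 n3 :: nat
  assumes all_sqrt: "\<forall>x::'a. \<exists>y. y * y = x"
    and sr: "\<forall>x. sr x * sr x = x"
    and q_nz: "q \<noteq> 0"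
    and q_not_root: "\<forall>k::nat. k > 0 \<longrightarrow> q ^ k \<noteq> 1"
    and s: "s * s = q"
    and n1: "n1 \<ge> 1" and n2: "n2 \<ge> 1" and n3: "n3 \<ge> 1"
  shows
   "let d1 = n1 + 1; d2 = n2 + 1; d3 = n3 + 1;
        R12 = leg12 (Rmat q s sr n1 n2 indet) d3;
        R13 = leg13 d1 d2 d3 (Rmat q s sr n1 n3 indet);
        R23 = leg23 d1 (Rmat q s sr n2 n3 indet);
        H12 = leg12 (Rhat s n1 n2) d3;
        H13 = leg13 d1 d2 d3 (Rhat s n1 n3);
        H23 = leg23 d1 (Rhat s n2 n3)
    in R12 * H13 * H23 = H23 * H13 * R12
     \<and> R13 * H23 * H12 = H12 * H23 * R13
     \<and> R23 * H12 * H13 = H13 * H12 * R23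
     \<and> R12 * H23 * H13 = H13 * H23 * R12
     \<and> R13 * H12 * H23 = H23 * H12 * R13
     \<and> R23 * H13 * H12 = H12 * H13 * R23"
proof -
  have s0: "s \<noteq> 0" using s q_nz by auto
  have pos: "0 < n1" "0 < n2" "0 < n3" using n1 n2 n3 by simp_all
  define N where "N = (n1+1)*(n2+1)*(n3+1)"
  define h12 where "h12 i = hat_entry s n1 n2 (i div ((n2+1)*(n3+1))) (i div (n3+1) mod (n2+1))" for i
  define h13 where "h13 i = hat_entry s n1 n3 (i div ((n2+1)*(n3+1))) (i mod (n3+1))" for i
  define h23 where "h23 i = hat_entry s n2 n3 (i div (n3+1) mod (n2+1)) (i mod (n3+1))" for i
  let ?R12 = "leg12 (Rmat q s sr n1 n2 indet) (n3+1)"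
    and ?R13 = "leg13 (n1+1) (n2+1) (n3+1) (Rmat q s sr n1 n3 indet)"
    and ?R23 = "leg23 (n1+1) (Rmat q s sr n2 n3 indet)"
  have H: "leg12 (Rhat s n1 n2) (n3+1) = mat_diag N h12"
    "leg13 (n1+1) (n2+1) (n3+1) (Rhat s n1 n3) = mat_diag N h13"
    "leg23 (n1+1) (Rhat s n2 n3) = mat_diag N h23"
    unfolding N_def h12_def h13_def h23_def leg12_Rhat leg13_Rhat leg23_Rhat by (simp_all only: mult.assoc)
  have C: "?R12 \<in> carrier_mat N N" "?R13 \<in> carrier_mat N N" "?R23 \<in> carrier_mat N N"
    using carrier_matD[OF Rmat_carrier[OF pos(1,2), of q s sr indet]]
      carrier_matD[OF Rmat_carrier[OF pos(2,3), of q s sr indet]]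
    unfolding N_def by (auto intro!: carrier_matI simp: algebra_simps)
  have "weight_preserving (\<lambda>i. h13 i * h23 i) (\<lambda>i. h13 i * h23 i) ?R12"
    using weight_preserving_leg12_index_sum[OF Rmat_carrier[OF pos(1,2)] weight_preserving_Rmat[OF pos(1,2)],
        of "hat_entry s (n1+n2) n3" "n3+1"]
    by (simp add: h13_def h23_def hat_entry_mult_left[OF s0])
  moreover have "weight_preserving (\<lambda>i. h12 i * h23 i) (\<lambda>i. h12 i * h23 i) ?R13"
    using weight_preserving_leg13_index_sum[OF Rmat_carrier[OF pos(1,3)] weight_preserving_Rmat[OF pos(1,3)],
        of "hat_entry s (n1+n3) n2" "n2+1"]
    by (simp add: h12_def h23_def hat_entry_swap[of s n2 n3] hat_entry_mult_left[OF s0])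
  moreover have "weight_preserving (\<lambda>i. h12 i * h13 i) (\<lambda>i. h12 i * h13 i) ?R23"
    using weight_preserving_leg23_index_sum[OF Rmat_carrier[OF pos(2,3)] weight_preserving_Rmat[OF pos(2,3)],
        of "hat_entry s n1 (n2+n3)" "n1+1"]
    by (simp add: h12_def h13_def hat_entry_mult_right[OF s0])
  ultimately show ?thesis
    unfolding Let_def H using commute_mat_diag_mult[OF C(1)] commute_mat_diag_mult[OF C(2)]
      commute_mat_diag_mult[OF C(3)] by blast
qed

end
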